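(* In the Jolteon protocol described in the context, if a block $B$ is globally direct-committed, then any timeout certificate of a round higher than $B.r$ contains a $qc_{high}$ of round at least $B.r$.
   Context: Jolteon protocol. There are $n=3f+1$ replicas, at most $f$ Byzantine, the rest honest; reliable authenticated channels; ideal threshold signatures in which $2f+1$ shares on the same message from distinct replicas combine into a threshold signature. A block is $B=(id,qc,tc,r,v,txn)$, with $qc$ a quorum certificate of its parent, $tc$ a timeout certificate or $\bot$, round $r$, view $v=0$, transactions $txn$, and $id$ a collision-resistant hash of the contents. A quorum certificate (QC) for $B$ is a threshold signature on $(B.id,B.r,B.v)$ from $2f+1$ shares (votes); $qc.r=B.r$; $B$ is certified if a QC for it exists; a genesis block of round $0$ has a QC. QCs are compared by round. A timeout message for round $r$ is a share on $r$ with the sender's $qc_{high}$; a timeout certificate (TC) for round $r$ is a threshold signature on $r$ from $2f+1$ timeout messages together with their $2f+1$ $qc_{high}$'s (all of round $<r$). Each round $r$ has a leader $L_r$ (round robin). Each replica keeps $r_{vote}=0$, $r_{cur}=1$, $qc_{high}$ = genesis QC. Propose: upon entering round $r$, $L_r$ multicasts $B=(id,qc_{high},tc,r,0,txn)$, with $tc$ the round-$(r-1)$ TC if $L_r$ entered round $r$ by receiving it, else $\bot$. Vote: upon the first valid proposal $B=(id,qc,tc,r,v,txn)$ from $L_r$, execute Advance Round, Lock, Commit; then if $r=r_{cur}$, $v=v_{cur}=0$, $r>r_{vote}$, and either $r=qc.r+1$ or ($r=tc.r+1$ and $qc.r\ge\max\{q.r: q$ a $qc_{high}$ in $tc\}$),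 send a share on $(id,r,v)$ to $L_{r+1}$ and set $r_{vote}\gets r$. Lock: upon seeing a valid QC $qc$ (formed from votes or contained in a proposal, timeout message or TC), set $qc_{high}\gets\max(qc_{high},qc)$. Commit: whenever there are two certified blocks $B,B'$ with $B'.qc$ certifying $B$ and $B'.r=B.r+1$, commit $B$ and all its ancestors. Advance Round: set $r_{cur}\gets\max(r_{cur},r)$ upon receiving or forming a round-$(r-1)$ QC or TC. Timer: upon entering round $r$, send the round-$(r-1)$ TC to $L_r$ if held and reset a timer; on expiry stop voting in round $r_{cur}$ and multicast a timeout message; upon a valid timeout message or TC execute Advance Round, Lock, Commit; upon $2f+1$ timeout messages form a TC. Definition: a block $B$ is globally direct-committed if $f+1$ honest replicas each successfully perform the Vote step on a proposal of a block $B'$ in round $B.r+1$ such that $B'.qc$ certifies $B$ (these Vote calls invoke Lock, setting $qc_{high}\gets B'.qc$, and produce $f+1$ matching votes). *)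

theory Defs
  imports Main
begin

text \<open>Model of the Jolteon protocol (view fixed to 0).  Honest replicas are a set Hon; every honest replica
  runs the local state machine below, driven by an arbitrary (adversarially scheduled)
  sequence of input events.  Byzantine replicas are unconstrained; their only influence
  on the statement is through the timeout messages they may contribute to a TC.\<close>

definition replicas :: "nat \<Rightarrow> nat set" where
  "replicas f = {..<3*f+1}"

text \<open>A quorum certificate: threshold signature on (id, round, view).\<close>
datatype 'i qc = QC (qc_id: 'i) (qc_round: nat) (qc_view: nat)

text \<open>A timeout certificate of round tc_round: the 2f+1 timeout messages it is
  combined from, each given as (sender, sender's qc_high).\<close>
datatype 'i tc = TC (tc_round: nat) (tc_msgs: "(nat \<times> 'i qc) list")

record ('i, 't) block =
  bid :: 'i
  bqc :: "'i qc"
  btc :: "'i tc option"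
  bround :: nat
  bview :: nat
  btxn :: 't

text \<open>Local state of a replica; tmo = the timer of round rcur has expired
  (so the replica has stopped voting in round rcur).\<close>
record 'i rstate =
  rvote :: nat
  rcur :: nat
  qchigh :: "'i qc"
  tmo :: bool

definition init_state :: "'i \<Rightarrow> 'i rstate" where
  "init_state g = \<lparr>rvote = 0, rcur = 1, qchigh = QC g 0 0, tmo = False\<rparr>"

definition maxqc :: "'i qc \<Rightarrow> 'i qc \<Rightarrow> 'i qc" where
  "maxqc a b = (if qc_round a < qc_round b then b else a)"

definition lock :: "'i rstate \<Rightarrow> 'i qc \<Rightarrow> 'i rstate" where
  "lock s q = s\<lparr>qchigh := maxqc (qchigh s) q\<rparr>"

definition advance :: "'i rstate \<Rightarrow> nat \<Rightarrow> 'i rstate" where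
  "advance s r = (if rcur s < r then s\<lparr>rcur := r, tmo := False\<rparr> else s)"

text \<open>Seeing a valid QC of round r-1: Advance Round (to r), Lock (Commit has no effect
  on the state relevant here).\<close>
definition see_qc :: "'i rstate \<Rightarrow> 'i qc \<Rightarrow> 'i rstate" where
  "see_qc s q = lock (advance s (Suc (qc_round q))) q"

definition see_tc :: "'i rstate \<Rightarrow> 'i tc \<Rightarrow> 'i rstate" where
  "see_tc s t = foldl see_qc (advance s (Suc (tc_round t))) (map snd (tc_msgs t))"

definition pre_vote :: "'i rstate \<Rightarrow> ('i, 't) block \<Rightarrow> 'i rstate" where
  "pre_vote s B = (let s1 = see_qc s (bqc B) in
     (case btc B of None \<Rightarrow> s1 | Some t \<Rightarrow> see_tc s1 t))"

definition vote_cond :: "'i rstate \<Rightarrow> ('i, 't) block \<Rightarrow> bool" where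
  "vote_cond s B \<longleftrightarrow>
     bround B = rcur s \<and> bview B = 0 \<and> bround B > rvote s \<and> \<not> tmo s \<and>
     (bround B = Suc (qc_round (bqc B)) \<or>
      (\<exists>t. btc B = Some t \<and> bround B = Suc (tc_round t) \<and>
           (\<forall>(j, q) \<in> set (tc_msgs t). qc_round q \<le> qc_round (bqc B))))"

definition proposal_step :: "'i rstate \<Rightarrow> ('i, 't) block \<Rightarrow> 'i rstate" where
  "proposal_step s B = (let s2 = pre_vote s B in
     if vote_cond s2 B then s2\<lparr>rvote := bround B\<rparr> else s2)"

datatype ('i, 't) event =
    RecvProposal "('i, 't) block"       \<comment> \<open>first valid proposal of its round from its leader\<close>
  | SeeQC "'i qc"                        \<comment> \<open>a valid QC formed from votes or received\<close>
  | RecvTimeout nat nat "'i qc"          \<comment> \<open>valid timeout message (sender, round, qc_high)\<close>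
  | SeeTC "'i tc"                        \<comment> \<open>valid TC received or formed\<close>
  | Expire
  | Noop

fun step :: "'i rstate \<Rightarrow> ('i, 't) event \<Rightarrow> 'i rstate" where
  "step s (RecvProposal B) = proposal_step s B"
| "step s (SeeQC q) = see_qc s q"
| "step s (RecvTimeout j r q) = see_qc s q"
| "step s (SeeTC t) = see_tc s t"
| "step s Expire = s\<lparr>tmo := True\<rparr>"
| "step s Noop = s"

fun run :: "'i \<Rightarrow> (nat \<Rightarrow> ('i, 't) event) \<Rightarrow> nat \<Rightarrow> 'i rstate" where
  "run g ev 0 = init_state g"
| "run g ev (Suc k) = step (run g ev k) (ev k)"

text \<open>The honest replica sends a timeout message for round r carrying qc_high q.\<close>
definition timeout_sent :: "'i \<Rightarrow> (nat \<Rightarrow> ('i, 't) event) \<Rightarrow> nat \<Rightarrow> 'i qc \<Rightarrow> bool" where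
  "timeout_sent g ev r q \<longleftrightarrow>
     (\<exists>k. ev k = Expire \<and> rcur (run g ev k) = r \<and> qchigh (run g ev k) = q)"

definition votes_at :: "'i \<Rightarrow> (nat \<Rightarrow> ('i, 't) event) \<Rightarrow> nat \<Rightarrow> ('i, 't) block \<Rightarrow> bool" where
  "votes_at g ev k B' \<longleftrightarrow> ev k = RecvProposal B' \<and> vote_cond (pre_vote (run g ev k) B') B'"

definition certifies :: "'i qc \<Rightarrow> ('i, 't) block \<Rightarrow> bool" where
  "certifies q B \<longleftrightarrow> q = QC (bid B) (bround B) (bview B)"

definition globally_direct_committed ::
  "nat \<Rightarrow> nat set \<Rightarrow> 'i \<Rightarrow> (nat \<Rightarrow> nat \<Rightarrow> ('i, 't) event) \<Rightarrow> ('i, 't) block \<Rightarrow> bool" where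
  "globally_direct_committed f Hon g evs B \<longleftrightarrow>
     (\<exists>S \<subseteq> Hon. card S \<ge> f + 1 \<and>
        (\<forall>i \<in> S. \<exists>k B'. bround B' = bround B + 1 \<and> certifies (bqc B') B \<and>
                         votes_at g (evs i) k B'))"

definition valid_tc ::
  "nat \<Rightarrow> nat set \<Rightarrow> 'i \<Rightarrow> (nat \<Rightarrow> nat \<Rightarrow> ('i, 't) event) \<Rightarrow> 'i tc \<Rightarrow> bool" where
  "valid_tc f Hon g evs t \<longleftrightarrow>
     length (tc_msgs t) = 2*f + 1 \<and> distinct (map fst (tc_msgs t)) \<and>
     (\<forall>(j, q) \<in> set (tc_msgs t). j \<in> replicas f \<and> qc_round q < tc_round t \<and>
        (j \<in> Hon \<longrightarrow> timeout_sent g (evs j) (tc_round t) q))"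

end

theory Submission
  imports Defs
begin

text \<open>An honest replica never moves backwards: its current round and the round of its
  qc_high only grow, and once its timer for the current round has expired it stays expired
  until the round changes.  Direct commitment of B gives f+1 honest replicas that voted in
  round B.r+1 for a block whose QC certifies B, and a TC is combined from 2f+1 timeout
  messages of distinct replicas; among 3f+1 replicas these two sets share some honest i.
  Had i sent its timeout for round tc_round t > B.r before voting, it would have been in a
  round \<ge> B.r+1 with an expired timer, so it could no longer vote in round B.r+1.  Hence i
  sent the timeout after voting, when its qc_high had already been locked to round \<ge> B.r.\<close>

definition rstate_le :: "'i rstate \<Rightarrow> 'i rstate \<Rightarrow> bool" where
  "rstate_le s s' \<longleftrightarrow> rcur s \<le> rcur s' \<and> qc_round (qchigh s) \<le> qc_round (qchigh s') \<and>
     (rcur s' = rcur s \<and> tmo s \<longrightarrow> tmo s')"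

lemma rstate_le_refl: "rstate_le s s"
  by (simp add: rstate_le_def)

lemma rstate_le_trans: "rstate_le s1 s2 \<Longrightarrow> rstate_le s2 s3 \<Longrightarrow> rstate_le s1 s3"
  unfolding rstate_le_def by (metis le_antisym order_trans)

lemma rstate_le_advance: "rstate_le s (advance s r)"
  by (simp add: rstate_le_def advance_def)

lemma rstate_le_lock: "rstate_le s (lock s q)"
  by (simp add: rstate_le_def lock_def maxqc_def)

lemma rstate_le_see_qc: "rstate_le s (see_qc s q)"
  unfolding see_qc_def by (rule rstate_le_trans[OF rstate_le_advance rstate_le_lock])

lemma rstate_le_foldl_see_qc: "rstate_le s (foldl see_qc s qs)"
proof (induction qs arbitrary: s)
  case Nil
  show ?case by (simp add: rstate_le_refl)
next
  case (Cons q qs)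
  show ?case using rstate_le_trans[OF rstate_le_see_qc Cons.IH] by simp
qed

lemma rstate_le_see_tc: "rstate_le s (see_tc s t)"
  unfolding see_tc_def by (rule rstate_le_trans[OF rstate_le_advance rstate_le_foldl_see_qc])

lemma rstate_le_pre_vote: "rstate_le s (pre_vote s B)"
  unfolding pre_vote_def Let_def
  by (cases "btc B")
    (auto intro: rstate_le_see_qc rstate_le_trans[OF rstate_le_see_qc rstate_le_see_tc])

lemma rstate_le_proposal_step: "rstate_le s (proposal_step s B)"
  using rstate_le_pre_vote[of s B]
  by (simp add: proposal_step_def Let_def rstate_le_def)

lemma rstate_le_step: "rstate_le s (step s e)"
proof (cases e)
  case Expire
  then show ?thesis by (simp add: rstate_le_def)
qed (simp_all add: rstate_le_proposal_step rstate_le_see_qc rstate_le_see_tc rstate_le_refl)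

lemma rstate_le_run: "k \<le> k' \<Longrightarrow> rstate_le (run g ev k) (run g ev k')"
proof (induction k' rule: dec_induct)
  case base
  show ?case by (rule rstate_le_refl)
next
  case (step k')
  then show ?case using rstate_le_trans rstate_le_step by (metis run.simps(2))
qed

lemma qc_round_bqc_le_proposal_step:
  "qc_round (bqc B) \<le> qc_round (qchigh (proposal_step s B))"
proof -
  let ?s1 = "see_qc s (bqc B)"
  have locked: "qc_round (bqc B) \<le> qc_round (qchigh ?s1)"
    by (simp add: see_qc_def lock_def maxqc_def)
  have "rstate_le ?s1 (pre_vote s B)"
    by (cases "btc B") (simp_all add: pre_vote_def rstate_le_refl rstate_le_see_tc)
  with locked show ?thesis
    by (simp add: proposal_step_def Let_def rstate_le_def)
qed

lemma no_vote_after_timeout: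
  assumes "ev k' = Expire" and "bround B' \<le> rcur (run g ev k')" and "k' < k"
  shows "\<not> votes_at g ev k B'"
proof
  let ?expired = "run g ev (Suc k')" and ?p = "pre_vote (run g ev k) B'"
  assume "votes_at g ev k B'"
  then have "rcur ?p = bround B'" and "\<not> tmo ?p"
    by (simp_all add: votes_at_def vote_cond_def)
  moreover have "tmo ?expired" and "bround B' \<le> rcur ?expired"
    using assms(1,2) by simp_all
  moreover have "rstate_le ?expired (run g ev k)"
    using \<open>k' < k\<close> by (intro rstate_le_run) simp
  then have "rstate_le ?expired ?p"
    using rstate_le_pre_vote by (rule rstate_le_trans)
  ultimately show False
    unfolding rstate_le_def by (metis le_antisym)
qed

lemma qc_round_bqc_le_after_vote:
  assumes "votes_at g ev k B'" and "k < k'"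
  shows "qc_round (bqc B') \<le> qc_round (qchigh (run g ev k'))"
proof -
  have "run g ev (Suc k) = proposal_step (run g ev k) B'"
    using assms(1) by (simp add: votes_at_def)
  moreover have "rstate_le (run g ev (Suc k)) (run g ev k')"
    using assms(2) by (intro rstate_le_run) simp
  ultimately show ?thesis
    using qc_round_bqc_le_proposal_step[of B' "run g ev k"] by (simp add: rstate_le_def)
qed

lemma timeout_after_vote_carries_qc:
  assumes "votes_at g ev k B'" and "timeout_sent g ev r q" and "bround B' \<le> r"
  shows "qc_round (bqc B') \<le> qc_round q"
proof -
  obtain k' where expire: "ev k' = Expire" and round: "rcur (run g ev k') = r"
    and q: "qchigh (run g ev k') = q"
    using assms(2) by (auto simp: timeout_sent_def)
  have "k < k'"
  proof (rule ccontr)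
    assume "\<not> k < k'"
    moreover have "k' \<noteq> k"
      using expire assms(1) by (auto simp: votes_at_def)
    ultimately show False
      using no_vote_after_timeout[of ev k' B' g k] expire round assms by simp
  qed
  then show ?thesis
    using qc_round_bqc_le_after_vote[OF assms(1)] q by blast
qed

lemma quorums_intersect:
  assumes "finite U" and "A \<subseteq> U" and "B \<subseteq> U" and "card U < card A + card B"
  shows "A \<inter> B \<noteq> {}"
proof
  assume "A \<inter> B = {}"
  then have "card A + card B = card (A \<union> B)"
    using assms(1-3) by (simp add: card_Un_disjoint finite_subset)
  also have "\<dots> \<le> card U"
    using assms(1-3) by (simp add: card_mono)
  finally show False using assms(4) by simp
qed

lemma card_tc_senders:
  assumes "valid_tc f Hon g evs t"
  shows "card (fst ` set (tc_msgs t)) = 2 * f + 1"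
  using assms distinct_card[of "map fst (tc_msgs t)"] by (simp add: valid_tc_def)

theorem lemma2:
  fixes f :: nat and Hon :: "nat set" and g :: 'i
    and evs :: "nat \<Rightarrow> nat \<Rightarrow> ('i, 't) event"
    and B :: "('i, 't) block" and t :: "'i tc"
  assumes "Hon \<subseteq> replicas f"
    and "card (replicas f - Hon) \<le> f"
    and "globally_direct_committed f Hon g evs B"
    and "valid_tc f Hon g evs t"
    and "tc_round t > bround B"
  shows "\<exists>(j, q) \<in> set (tc_msgs t). qc_round q \<ge> bround B"
proof -
  obtain S where "S \<subseteq> Hon" and "card S \<ge> f + 1" and voters:
    "\<forall>i \<in> S. \<exists>k B'. bround B' = bround B + 1 \<and> certifies (bqc B') B \<and>
       votes_at g (evs i) k B'"
    using assms(3) by (auto simp: globally_direct_committed_def)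
  have "S \<inter> fst ` set (tc_msgs t) \<noteq> {}"
  proof (rule quorums_intersect)
    show "S \<subseteq> replicas f" using \<open>S \<subseteq> Hon\<close> assms(1) by blast
    show "fst ` set (tc_msgs t) \<subseteq> replicas f" using assms(4) by (auto simp: valid_tc_def)
    show "card (replicas f) < card S + card (fst ` set (tc_msgs t))"
      using \<open>card S \<ge> f + 1\<close> card_tc_senders[OF assms(4)] by (simp add: replicas_def)
  qed (simp add: replicas_def)
  then obtain i q where "i \<in> S" and msg: "(i, q) \<in> set (tc_msgs t)" by force
  then have "timeout_sent g (evs i) (tc_round t) q"
    using \<open>S \<subseteq> Hon\<close> assms(4) by (auto simp: valid_tc_def)
  moreover obtain k B' where "bround B' = bround B + 1" and "certifies (bqc B') B"
    and "votes_at g (evs i) k B'"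
    using voters \<open>i \<in> S\<close> by blast
  ultimately have "qc_round q \<ge> bround B"
    using timeout_after_vote_carries_qc assms(5) by (fastforce simp: certifies_def)
  with msg show ?thesis by blast
qed

end
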